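(* For the RCP model with queue feedback (parameters $C,a,b,\tau_1,\tau_2>0$, bifurcation parameter $\kappa$), the criticality of the Hopf bifurcation at $\kappa=\kappa_c$ (i.e. the sign of $\mu_2$) does not depend on the protocol parameter $a$, and there exist parameter values $b>0$, $\tau_1,\tau_2>0$ for which this Hopf bifurcation is sub-critical ($\mu_2<0$), in contrast with the model without queue feedback, for which it is always super-critical.
   Context: RCP model with queue feedback: $$\frac{d}{dt}R(t)=\kappa\,\frac{2aR(t)}{C(\tau_1+\tau_2)}\Big(C-y(t)-bC\,p\big(y(t)\big)\Big),\quad y(t)=R(t-\tau_1)+R(t-\tau_2),\quad p(y)=\frac{y}{2(C-y)},$$ with equilibrium $R^*=\frac{C(4+b-\sqrt{b^2+8b})}{8}$, linearization coefficient $\tilde a=\frac{a}{\tau_1+\tau_2}[1+2R^*/C]$, and critical value $\kappa_c=\dfrac{\pi}{2\tilde a(\tau_1+\tau_2)\cos\!\left(\frac{\pi(\tau_1-\tau_2)}{2(\tau_1+\tau_2)}\right)}$ at which the equilibrium loses stability via a Hopf bifurcation. $\mu_2=-\operatorname{Re}c_1(0)/\alpha'(0)$, where $c_1(0)$ is the first Lyapunov coefficient of the Hopf normal form at $\kappa_c$ and $\alpha'(0)=\operatorname{Re}(d\lambda/d\kappa)|_{\kappa_c}>0$; the bifurcation is super-critical if $\mu_2>0$ and sub-critical if $\mu_2<0$. The model without queue feedback is $\frac{d}{dt}R(t)=\kappa\,\frac{2aR(t)}{\gamma C(\tau_1+\tau_2)}(\gamma C-y(t))$, $\gamma\in(0,1]$.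 *)

theory Defs
  imports "HOL-Analysis.Analysis"
begin

text \<open>A scalar retarded equation u'(t) = F (u t) (u (t - tau1)) (u (t - tau2)),
  written in deviation variables (F 0 0 0 = 0). Delay index j = 0,1,2 stands for
  the delays 0, tau1, tau2.\<close>

type_synonym rhs = "real \<Rightarrow> real \<Rightarrow> real \<Rightarrow> real"

definition delays :: "real \<Rightarrow> real \<Rightarrow> nat \<Rightarrow> real" where
  "delays tau1 tau2 j = (if j = 0 then 0 else if j = 1 then tau1 else tau2)"

text \<open>n-th derivative of F along the ray t * v at t = 0 (i.e. the n-th order
  homogeneous Taylor form evaluated at v).\<close>
definition dirD :: "nat \<Rightarrow> rhs \<Rightarrow> (nat \<Rightarrow> real) \<Rightarrow> real" where
  "dirD n F v = (deriv ^^ n) (\<lambda>t. F (t * v 0) (t * v 1) (t * v 2)) 0"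

definition unitv :: "nat \<Rightarrow> nat \<Rightarrow> real" where
  "unitv j = (\<lambda>i. if i = j then 1 else 0)"

text \<open>Coefficients of the linearization: u'(t) = sum_j A_j u(t - r_j).\<close>
definition linc :: "rhs \<Rightarrow> nat \<Rightarrow> real" where
  "linc F j = dirD 1 F (unitv j)"

text \<open>Symmetric bilinear / trilinear forms of the second / third derivative
  (polarization).\<close>
definition bil :: "rhs \<Rightarrow> (nat \<Rightarrow> real) \<Rightarrow> (nat \<Rightarrow> real) \<Rightarrow> real" where
  "bil F x y = (dirD 2 F (\<lambda>j. x j + y j) - dirD 2 F (\<lambda>j. x j - y j)) / 4"

definition tril :: "rhs \<Rightarrow> (nat \<Rightarrow> real) \<Rightarrow> (nat \<Rightarrow> real) \<Rightarrow> (nat \<Rightarrow> real) \<Rightarrow> real" where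
  "tril F x y z =
     (\<Sum>e1\<in>{-1,1::real}. \<Sum>e2\<in>{-1,1::real}. \<Sum>e3\<in>{-1,1::real}.
        e1 * e2 * e3 * dirD 3 F (\<lambda>j. e1 * x j + e2 * y j + e3 * z j)) / 48"

definition cpart :: "bool \<Rightarrow> complex \<Rightarrow> real" where
  "cpart s c = (if s then Im c else Re c)"

definition cwt :: "bool \<Rightarrow> complex" where
  "cwt s = (if s then \<i> else 1)"

definition cbil :: "rhs \<Rightarrow> (nat \<Rightarrow> complex) \<Rightarrow> (nat \<Rightarrow> complex) \<Rightarrow> complex" where
  "cbil F a b = (\<Sum>s1\<in>(UNIV::bool set). \<Sum>s2\<in>(UNIV::bool set).
      cwt s1 * cwt s2 * complex_of_real (bil F (\<lambda>j. cpart s1 (a j)) (\<lambda>j. cpart s2 (b j))))"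

definition ctril :: "rhs \<Rightarrow> (nat \<Rightarrow> complex) \<Rightarrow> (nat \<Rightarrow> complex) \<Rightarrow> (nat \<Rightarrow> complex) \<Rightarrow> complex" where
  "ctril F a b c = (\<Sum>s1\<in>(UNIV::bool set). \<Sum>s2\<in>(UNIV::bool set). \<Sum>s3\<in>(UNIV::bool set).
      cwt s1 * cwt s2 * cwt s3 *
      complex_of_real (tril F (\<lambda>j. cpart s1 (a j)) (\<lambda>j. cpart s2 (b j)) (\<lambda>j. cpart s3 (c j))))"

definition charfun :: "rhs \<Rightarrow> real \<Rightarrow> real \<Rightarrow> complex \<Rightarrow> complex" where
  "charfun F tau1 tau2 l =
     l - (\<Sum>j<3. complex_of_real (linc F j) * exp (- l * complex_of_real (delays tau1 tau2 j)))"

definition charfun_deriv :: "rhs \<Rightarrow> real \<Rightarrow> real \<Rightarrow> complex \<Rightarrow> complex" where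
  "charfun_deriv F tau1 tau2 l =
     1 + (\<Sum>j<3. complex_of_real (linc F j * delays tau1 tau2 j)
                 * exp (- l * complex_of_real (delays tau1 tau2 j)))"

text \<open>First Lyapunov coefficient c_1(0) of the Hopf normal form on the centre
  manifold at the eigenvalue i*omega (standard Hassard--Kazarinoff--Wan
  centre-manifold reduction for retarded equations): with
  x_t = z q + conj z conj q + w, q(theta) = exp(i omega theta),
  the reduced equation is z' = i omega z + g(z, conj z) with
  g = N(x_t) / Delta'(i omega), N the nonlinear part of F.\<close>
definition first_lyap :: "rhs \<Rightarrow> real \<Rightarrow> real \<Rightarrow> real \<Rightarrow> complex" where
  "first_lyap F tau1 tau2 \<omega> =
    (let w = complex_of_real \<omega>;
         r = (\<lambda>j. complex_of_real (delays tau1 tau2 j));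
         q = (\<lambda>j. exp (- \<i> * w * r j));
         qb = (\<lambda>j. cnj (q j));
         D = 1 / charfun_deriv F tau1 tau2 (\<i> * w);
         g20 = D * cbil F q q;
         g11 = D * cbil F q qb;
         g02 = D * cbil F qb qb;
         E1 = cbil F q q / charfun F tau1 tau2 (2 * \<i> * w);
         E2 = cbil F q qb / charfun F tau1 tau2 0;
         w20 = (\<lambda>j. \<i> * g20 / w * q j + \<i> * cnj g02 / (3 * w) * qb j
                     + E1 * exp (- 2 * \<i> * w * r j));
         w11 = (\<lambda>j. - \<i> * g11 / w * q j + \<i> * cnj g11 / w * qb j + E2);
         g21 = D * (2 * cbil F q w11 + cbil F qb w20 + ctril F q q qb)
     in \<i> / (2 * w) * (g20 * g11 - 2 * (complex_of_real (cmod g11))\<^sup>2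
                       - (complex_of_real (cmod g02))\<^sup>2 / 3) + g21 / 2)"

text \<open>Transversality speed alpha'(0) = Re (d lambda / d kappa) at kappa_c for a
  kappa-family Fk of right-hand sides, obtained by implicit differentiation of
  Delta(kappa, lambda(kappa)) = 0 at lambda = i omega.\<close>
definition alpha_deriv :: "(real \<Rightarrow> rhs) \<Rightarrow> real \<Rightarrow> real \<Rightarrow> real \<Rightarrow> real \<Rightarrow> real" where
  "alpha_deriv Fk tau1 tau2 kc \<omega> =
     Re ((\<Sum>j<3. complex_of_real (deriv (\<lambda>k. linc (Fk k) j) kc)
                 * exp (- \<i> * complex_of_real \<omega> * complex_of_real (delays tau1 tau2 j)))
         / charfun_deriv (Fk kc) tau1 tau2 (\<i> * complex_of_real \<omega>))"

definition mu2 :: "(real \<Rightarrow> rhs) \<Rightarrow> real \<Rightarrow> real \<Rightarrow> real \<Rightarrow> real \<Rightarrow> real" where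
  "mu2 Fk tau1 tau2 kc \<omega> = - Re (first_lyap (Fk kc) tau1 tau2 \<omega>) / alpha_deriv Fk tau1 tau2 kc \<omega>"

definition kappa_crit :: "real \<Rightarrow> real \<Rightarrow> real \<Rightarrow> real" where
  "kappa_crit atl tau1 tau2 =
     pi / (2 * atl * (tau1 + tau2) * cos (pi * (tau1 - tau2) / (2 * (tau1 + tau2))))"

text \<open>Frequency of the critical root i*omega at kappa = kappa_c.\<close>
definition hopf_freq :: "real \<Rightarrow> real \<Rightarrow> real" where
  "hopf_freq tau1 tau2 = pi / (tau1 + tau2)"

definition pq :: "real \<Rightarrow> real \<Rightarrow> real" where
  "pq C y = y / (2 * (C - y))"

definition Rstar :: "real \<Rightarrow> real \<Rightarrow> real" where
  "Rstar C b = C * (4 + b - sqrt (b\<^sup>2 + 8 * b)) / 8"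

definition rcpq_rhs :: "real \<Rightarrow> real \<Rightarrow> real \<Rightarrow> real \<Rightarrow> real \<Rightarrow> real \<Rightarrow> rhs" where
  "rcpq_rhs C a b tau1 tau2 \<kappa> R0 R1 R2 =
     \<kappa> * (2 * a * R0 / (C * (tau1 + tau2))) * (C - (R1 + R2) - b * C * pq C (R1 + R2))"

definition rcpq_dev :: "real \<Rightarrow> real \<Rightarrow> real \<Rightarrow> real \<Rightarrow> real \<Rightarrow> real \<Rightarrow> rhs" where
  "rcpq_dev C a b tau1 tau2 \<kappa> u0 u1 u2 =
     rcpq_rhs C a b tau1 tau2 \<kappa> (Rstar C b + u0) (Rstar C b + u1) (Rstar C b + u2)"

definition atilde_q :: "real \<Rightarrow> real \<Rightarrow> real \<Rightarrow> real \<Rightarrow> real \<Rightarrow> real" where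
  "atilde_q C a b tau1 tau2 = a / (tau1 + tau2) * (1 + 2 * Rstar C b / C)"

definition mu2_q :: "real \<Rightarrow> real \<Rightarrow> real \<Rightarrow> real \<Rightarrow> real \<Rightarrow> real" where
  "mu2_q C a b tau1 tau2 =
     mu2 (rcpq_dev C a b tau1 tau2) tau1 tau2
         (kappa_crit (atilde_q C a b tau1 tau2) tau1 tau2) (hopf_freq tau1 tau2)"

definition rcp_rhs :: "real \<Rightarrow> real \<Rightarrow> real \<Rightarrow> real \<Rightarrow> real \<Rightarrow> real \<Rightarrow> rhs" where
  "rcp_rhs C \<gamma> a tau1 tau2 \<kappa> R0 R1 R2 =
     \<kappa> * (2 * a * R0 / (\<gamma> * C * (tau1 + tau2))) * (\<gamma> * C - (R1 + R2))"

text \<open>Equilibrium gamma C / 2; linearization coefficient a / (tau1 + tau2).\<close>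
definition rcp_dev :: "real \<Rightarrow> real \<Rightarrow> real \<Rightarrow> real \<Rightarrow> real \<Rightarrow> real \<Rightarrow> rhs" where
  "rcp_dev C \<gamma> a tau1 tau2 \<kappa> u0 u1 u2 =
     rcp_rhs C \<gamma> a tau1 tau2 \<kappa> (\<gamma> * C / 2 + u0) (\<gamma> * C / 2 + u1) (\<gamma> * C / 2 + u2)"

definition mu2_nq :: "real \<Rightarrow> real \<Rightarrow> real \<Rightarrow> real \<Rightarrow> real \<Rightarrow> real" where
  "mu2_nq C \<gamma> a tau1 tau2 =
     mu2 (rcp_dev C \<gamma> a tau1 tau2) tau1 tau2
         (kappa_crit (a / (tau1 + tau2)) tau1 tau2) (hopf_freq tau1 tau2)"

end

theory Submission
  imports Defs
begin

(* Both models have the form u0' = K (R + u0) h(Y + u1 + u2) in deviation variables, with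
   kappa entering only through the gain K.  Along such a family alpha'(0) is Re(L q / Delta') / kappa_c,
   so mu2 = - kappa_c Re c1(0) / Re(L q / Delta') where c1(0) depends on a only through
   kappa_c a, which is independent of a: this gives the a-independence of the sign.
   At kappa_c everything is explicit in omega = pi / (tau1 + tau2) and the phase
   phi = pi (tau1 - tau2) / (2 (tau1 + tau2)): the critical eigenvector has entries
   1, -sin phi - i cos phi, sin phi - i cos phi, Delta'(i omega) = 1 + phi tan phi + i pi / 2, and
   Re(L q / Delta') > 0.  Without queue feedback the nonlinearity is -beta u0 (u1 + u2), for which
   Re c1(0) is a negative multiple of Re((cos phi + i cos 2phi) / (Delta' (cos 2phi - 2 i cos phi))),
   positive by the inequality pi cos^2 phi + pi cos^2 2phi / 2 > (cos phi + phi sin phi) cos 2phi;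
   hence mu2 > 0.  For b = 1/6 and tau1 = tau2 = 1 the exact normal form computation gives
   Re c1(0) = (123008/2205 pi - 2624/735 pi^2) / ((4 + pi^2) C^2) > 0, hence mu2 < 0. *)

section \<open>Rational feedback right-hand sides\<close>

lemma deriv_funpow_eq:
  fixes fs :: "nat \<Rightarrow> real \<Rightarrow> real"
  assumes S: "open S" and f: "\<And>t. t \<in> S \<Longrightarrow> f t = fs 0 t"
    and d: "\<And>k t. k < n \<Longrightarrow> t \<in> S \<Longrightarrow> (fs k has_real_derivative fs (Suc k) t) (at t)"
  shows "t \<in> S \<Longrightarrow> (deriv ^^ n) f t = fs n t"
  using d
proof (induction n arbitrary: t)
  case 0
  then show ?case using f by simp
next
  case (Suc n)
  have IH: "\<And>t. t \<in> S \<Longrightarrow> (deriv ^^ n) f t = fs n t"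
    using Suc.IH Suc.prems(2) by auto
  have "eventually (\<lambda>x. (deriv ^^ n) f x = fs n x) (nhds t)"
    using eventually_nhds_in_open[OF S Suc.prems(1)] by (rule eventually_mono) (use IH in auto)
  then have "(deriv ^^ Suc n) f t = deriv (fs n) t"
    by (simp add: deriv_cong_ev)
  also have "\<dots> = fs (Suc n) t"
    using Suc.prems by (intro DERIV_imp_deriv) auto
  finally show ?case .
qed

text \<open>With queue feedback Q = b C / 2 and E = C; without it Q = 0
  and E is irrelevant (any value other than Y).\<close>
definition feedback_rhs :: "real \<Rightarrow> real \<Rightarrow> real \<Rightarrow> real \<Rightarrow> real \<Rightarrow> real \<Rightarrow> rhs" where
  "feedback_rhs K R P Q E Y u0 u1 u2 =
     K * (R + u0) * (P - (Y + (u1 + u2)) - Q * (Y + (u1 + u2)) / (E - (Y + (u1 + u2))))"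

text \<open>h(Y), h'(Y), h''(Y), h'''(Y), writing h(y) = P + Q - y - Q E / (E - y).\<close>
definition feedback_d0 :: "real \<Rightarrow> real \<Rightarrow> real \<Rightarrow> real \<Rightarrow> real" where
  "feedback_d0 P Q E Y = P + Q - Y - Q * E / (E - Y)"

definition feedback_d1 :: "real \<Rightarrow> real \<Rightarrow> real \<Rightarrow> real" where
  "feedback_d1 Q E Y = - 1 - Q * E / (E - Y)^2"

definition feedback_d2 :: "real \<Rightarrow> real \<Rightarrow> real \<Rightarrow> real" where
  "feedback_d2 Q E Y = - 2 * Q * E / (E - Y)^3"

definition feedback_d3 :: "real \<Rightarrow> real \<Rightarrow> real \<Rightarrow> real" where
  "feedback_d3 Q E Y = - 6 * Q * E / (E - Y)^4"

definition feedback_ray_deriv ::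
    "real \<Rightarrow> real \<Rightarrow> real \<Rightarrow> real \<Rightarrow> real \<Rightarrow> real \<Rightarrow> real \<Rightarrow> real \<Rightarrow> nat \<Rightarrow> real \<Rightarrow> real" where
  "feedback_ray_deriv K R P Q E Y v0 s k t =
    (let u = R + t * v0; iz = inverse (E - Y - t * s);
         h0 = P + Q - Y - t * s - Q * E * iz;
         h1 = - s - Q * E * s * iz^2;
         h2 = - 2 * Q * E * s^2 * iz^3;
         h3 = - 6 * Q * E * s^3 * iz^4
     in if k = 0 then K * u * h0 else if k = 1 then K * (v0 * h0 + u * h1)
        else if k = 2 then K * (2 * v0 * h1 + u * h2) else K * (3 * v0 * h2 + u * h3))"

lemma feedback_ray_deriv_has_derivative:
  assumes "k < 3" "E - Y - t * s \<noteq> 0"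
  shows "(feedback_ray_deriv K R P Q E Y v0 s k has_real_derivative
            feedback_ray_deriv K R P Q E Y v0 s (Suc k) t) (at t)"
proof -
  consider "k = 0" | "k = 1" | "k = 2" using assms(1) by linarith
  then show ?thesis
    unfolding feedback_ray_deriv_def Let_def using assms(2)
    by cases (auto intro!: derivative_eq_intros
        simp: algebra_simps power2_eq_square power3_eq_cube power4_eq_xxxx)
qed

lemma dirD_feedback_rhs_ray:
  assumes EY: "E - Y \<noteq> 0" and n: "n \<le> 3"
  shows "dirD n (feedback_rhs K R P Q E Y) v = feedback_ray_deriv K R P Q E Y (v 0) (v 1 + v 2) n 0"
proof -
  let ?s = "v 1 + v 2"
  let ?S = "{t::real. E - Y - t * ?s \<noteq> 0}"
  have "open ?S" by (intro open_Collect_neq continuous_intros)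
  moreover have "0 \<in> ?S" using EY by simp
  moreover have "feedback_rhs K R P Q E Y (t * v 0) (t * v 1) (t * v 2)
                   = feedback_ray_deriv K R P Q E Y (v 0) ?s 0 t" if "t \<in> ?S" for t
  proof -
    have "Q * (Y + (t * v 1 + t * v 2)) / (E - (Y + (t * v 1 + t * v 2)))
            = Q * E * inverse (E - Y - t * ?s) - Q"
      using that by (simp add: field_simps)
    then have "feedback_rhs K R P Q E Y (t * v 0) (t * v 1) (t * v 2)
        = K * (R + t * v 0) * (P - (Y + (t * v 1 + t * v 2)) - (Q * E * inverse (E - Y - t * ?s) - Q))"
      by (simp only: feedback_rhs_def)
    then show ?thesis
      by (simp add: feedback_ray_deriv_def Let_def algebra_simps)
  qed
  ultimately show ?thesis
    unfolding dirD_def using n feedback_ray_deriv_has_derivative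
    by (intro deriv_funpow_eq[where fs = "feedback_ray_deriv K R P Q E Y (v 0) ?s"]) auto
qed

lemma dirD_feedback_rhs:
  assumes "E - Y \<noteq> 0"
  shows "dirD 1 (feedback_rhs K R P Q E Y) v =
           K * (v 0 * feedback_d0 P Q E Y + R * (v 1 + v 2) * feedback_d1 Q E Y)"
    and "dirD 2 (feedback_rhs K R P Q E Y) v =
           K * (2 * v 0 * (v 1 + v 2) * feedback_d1 Q E Y + R * (v 1 + v 2)^2 * feedback_d2 Q E Y)"
    and "dirD 3 (feedback_rhs K R P Q E Y) v =
           K * (3 * v 0 * (v 1 + v 2)^2 * feedback_d2 Q E Y + R * (v 1 + v 2)^3 * feedback_d3 Q E Y)"
  using assms
  by (simp_all add: dirD_feedback_rhs_ray feedback_ray_deriv_def feedback_d0_def feedback_d1_def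
      feedback_d2_def feedback_d3_def Let_def field_simps)

lemma linc_feedback_rhs:
  assumes "E - Y \<noteq> 0"
  shows "linc (feedback_rhs K R P Q E Y) j =
           K * (unitv j 0 * feedback_d0 P Q E Y + R * (unitv j 1 + unitv j 2) * feedback_d1 Q E Y)"
  unfolding linc_def dirD_feedback_rhs(1)[OF assms] by simp

lemma linc_feedback_rhs_scaled:
  assumes "E - Y \<noteq> 0"
  shows "linc (feedback_rhs (k * M) R P Q E Y) j = k * linc (feedback_rhs M R P Q E Y) j"
  using assms by (simp add: linc_feedback_rhs)

lemma bil_of_dirD2:
  assumes "\<And>v. dirD 2 F v = K * (2 * v 0 * (v 1 + v 2) * h1 + R * (v 1 + v 2)^2 * h2)"
  shows "bil F x y = K * (h1 * (x 0 * (y 1 + y 2) + y 0 * (x 1 + x 2)) + R * h2 * (x 1 + x 2) * (y 1 + y 2))"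
  unfolding bil_def assms by (simp add: algebra_simps power2_eq_square)

lemma tril_of_dirD3:
  assumes "\<And>v. dirD 3 F v = K * (3 * v 0 * (v 1 + v 2)^2 * h2 + R * (v 1 + v 2)^3 * h3)"
  shows "tril F x y z = K * (h2 * (x 0 * (y 1 + y 2) * (z 1 + z 2) + y 0 * (x 1 + x 2) * (z 1 + z 2)
      + z 0 * (x 1 + x 2) * (y 1 + y 2)) + R * h3 * (x 1 + x 2) * (y 1 + y 2) * (z 1 + z 2))"
  unfolding tril_def assms by (simp add: algebra_simps power2_eq_square power3_eq_cube)

lemma cbil_feedback_rhs:
  assumes "E - Y \<noteq> 0"
  shows "cbil (feedback_rhs K R P Q E Y) p p' =
           of_real K * (of_real (feedback_d1 Q E Y) * (p 0 * (p' 1 + p' 2) + p' 0 * (p 1 + p 2))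
             + of_real R * of_real (feedback_d2 Q E Y) * (p 1 + p 2) * (p' 1 + p' 2))"
  unfolding cbil_def bil_of_dirD2[OF dirD_feedback_rhs(2)[OF assms]] UNIV_bool
  by (simp add: cpart_def cwt_def complex_eq_iff algebra_simps)

lemma ctril_feedback_rhs:
  assumes "E - Y \<noteq> 0"
  shows "ctril (feedback_rhs K R P Q E Y) p p' p'' =
           of_real K * (of_real (feedback_d2 Q E Y) * (p 0 * (p' 1 + p' 2) * (p'' 1 + p'' 2)
             + p' 0 * (p 1 + p 2) * (p'' 1 + p'' 2) + p'' 0 * (p 1 + p 2) * (p' 1 + p' 2))
             + of_real R * of_real (feedback_d3 Q E Y) * (p 1 + p 2) * (p' 1 + p' 2) * (p'' 1 + p'' 2))"
  unfolding ctril_def tril_of_dirD3[OF dirD_feedback_rhs(3)[OF assms]] UNIV_bool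
  by (simp add: cpart_def cwt_def complex_eq_iff algebra_simps)

lemma feedback_rhs_no_queue:
  assumes "E - Y \<noteq> 0"
  shows "linc (feedback_rhs K R P 0 E Y) j = K * (unitv j 0 * (P - Y) - R * (unitv j 1 + unitv j 2))"
    and "cbil (feedback_rhs K R P 0 E Y) p p' = - of_real K * (p 0 * (p' 1 + p' 2) + p' 0 * (p 1 + p 2))"
    and "ctril (feedback_rhs K R P 0 E Y) p p' p'' = 0"
  using assms
  by (simp_all add: linc_feedback_rhs cbil_feedback_rhs ctril_feedback_rhs
      feedback_d0_def feedback_d1_def feedback_d2_def feedback_d3_def algebra_simps)

section \<open>Linearization and normal form at the critical frequency\<close>

definition crit_eigvec :: "real \<Rightarrow> real \<Rightarrow> real \<Rightarrow> nat \<Rightarrow> complex" where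
  "crit_eigvec tau1 tau2 \<omega> j = exp (- \<i> * of_real \<omega> * of_real (delays tau1 tau2 j))"

lemma alpha_deriv_linear_family:
  assumes lin: "\<And>k j. linc (Fk k) j = k * l j" and kc: "kc \<noteq> 0"
  shows "alpha_deriv Fk tau1 tau2 kc \<omega> =
           Re ((\<Sum>j<3. of_real (linc (Fk kc) j) * crit_eigvec tau1 tau2 \<omega> j)
               / charfun_deriv (Fk kc) tau1 tau2 (\<i> * of_real \<omega>)) / kc"
proof -
  have "deriv (\<lambda>k. linc (Fk k) j) kc = linc (Fk kc) j / kc" for j
  proof -
    have "((\<lambda>k. k * l j) has_real_derivative l j) (at kc)"
      by (auto intro!: derivative_eq_intros)
    then show ?thesis
      using kc by (simp add: lin DERIV_imp_deriv)
  qed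
  then have sum: "(\<Sum>j<3. of_real (deriv (\<lambda>k. linc (Fk k) j) kc) * crit_eigvec tau1 tau2 \<omega> j)
      = (\<Sum>j<3. of_real (linc (Fk kc) j) * crit_eigvec tau1 tau2 \<omega> j) / of_real kc"
    by (simp add: sum_divide_distrib)
  let ?X = "\<Sum>j<3. of_real (linc (Fk kc) j) * crit_eigvec tau1 tau2 \<omega> j"
  let ?D = "charfun_deriv (Fk kc) tau1 tau2 (\<i> * of_real \<omega>)"
  have "alpha_deriv Fk tau1 tau2 kc \<omega> = Re (?X / of_real kc / ?D)"
    unfolding alpha_deriv_def crit_eigvec_def[symmetric] sum ..
  also have "\<dots> = Re (?X / ?D / of_real kc)"
    by (simp only: divide_divide_eq_left mult.commute)
  finally show ?thesis
    by (simp only: Re_divide_of_real)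
qed

lemma mu2_linear_family:
  assumes "\<And>k j. linc (Fk k) j = k * l j" and "kc \<noteq> 0"
  shows "mu2 Fk tau1 tau2 kc \<omega> =
           - kc * Re (first_lyap (Fk kc) tau1 tau2 \<omega>)
           / Re ((\<Sum>j<3. of_real (linc (Fk kc) j) * crit_eigvec tau1 tau2 \<omega> j)
                 / charfun_deriv (Fk kc) tau1 tau2 (\<i> * of_real \<omega>))"
  unfolding mu2_def alpha_deriv_linear_family[OF assms] by (simp add: field_simps)

lemma exp_imaginary: "Re z = 0 \<Longrightarrow> exp z = Complex (cos (Im z)) (sin (Im z))"
  by (simp add: exp_eq_polar complex_eq_iff)

definition hopf_phase :: "real \<Rightarrow> real \<Rightarrow> real" where
  "hopf_phase tau1 tau2 = pi * (tau1 - tau2) / (2 * (tau1 + tau2))"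

lemma kappa_crit_eq: "kappa_crit atl tau1 tau2 = pi / (2 * atl * (tau1 + tau2) * cos (hopf_phase tau1 tau2))"
  unfolding kappa_crit_def hopf_phase_def ..

lemma abs_hopf_phase_less:
  assumes "tau1 > 0" "tau2 > 0"
  shows "\<bar>hopf_phase tau1 tau2\<bar> < pi / 2"
proof -
  have "\<bar>hopf_phase tau1 tau2\<bar> = pi * \<bar>tau1 - tau2\<bar> / (2 * (tau1 + tau2))"
    using assms by (simp add: hopf_phase_def abs_mult)
  also have "\<dots> < pi / 2"
  proof -
    have "\<bar>tau1 - tau2\<bar> < tau1 + tau2"
      using assms by (simp add: abs_less_iff)
    then have "pi * \<bar>tau1 - tau2\<bar> < pi / 2 * (2 * (tau1 + tau2))"
      by simp
    then show ?thesis
      using assms by (simp add: divide_less_eq)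
  qed
  finally show ?thesis .
qed

lemma cos_hopf_phase_pos:
  assumes "tau1 > 0" "tau2 > 0"
  shows "cos (hopf_phase tau1 tau2) > 0"
  using abs_hopf_phase_less[OF assms] by (intro cos_gt_zero_pi) (auto simp: abs_less_iff)

lemma kappa_crit_pos:
  assumes "atl > 0" "tau1 > 0" "tau2 > 0"
  shows "kappa_crit atl tau1 tau2 > 0"
  using assms cos_hopf_phase_pos[OF assms(2,3)] by (simp add: kappa_crit_eq)

lemma kappa_crit_mult:
  assumes "atl \<noteq> 0" "tau1 > 0" "tau2 > 0"
  shows "kappa_crit atl tau1 tau2 * atl = hopf_freq tau1 tau2 / (2 * cos (hopf_phase tau1 tau2))"
proof -
  have "pi / (2 * atl * T * c) * atl = pi / T / (2 * c)" if "T \<noteq> 0" "c \<noteq> 0" for T c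
    using that assms(1) by (simp add: field_simps)
  then show ?thesis
    using assms cos_hopf_phase_pos[OF assms(2,3)] by (simp add: kappa_crit_eq hopf_freq_def)
qed

lemma hopf_freq_mult_delays:
  assumes "tau1 + tau2 \<noteq> 0"
  shows "hopf_freq tau1 tau2 * tau1 = pi / 2 + hopf_phase tau1 tau2"
    and "hopf_freq tau1 tau2 * tau2 = pi / 2 - hopf_phase tau1 tau2"
  using assms by (simp_all add: hopf_freq_def hopf_phase_def field_simps)

lemma crit_eigvec_values:
  assumes "tau1 + tau2 \<noteq> 0"
  defines "\<phi> \<equiv> hopf_phase tau1 tau2"
  shows "crit_eigvec tau1 tau2 (hopf_freq tau1 tau2) 0 = 1"
    and "crit_eigvec tau1 tau2 (hopf_freq tau1 tau2) 1 = Complex (- sin \<phi>) (- cos \<phi>)"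
    and "crit_eigvec tau1 tau2 (hopf_freq tau1 tau2) 2 = Complex (sin \<phi>) (- cos \<phi>)"
  unfolding crit_eigvec_def delays_def \<phi>_def
  by (simp_all add: exp_imaginary hopf_freq_mult_delays[OF assms(1)] cos_add sin_add cos_diff sin_diff)

lemma crit_eigvec_double_values:
  assumes "tau1 + tau2 \<noteq> 0"
  defines "\<phi> \<equiv> hopf_phase tau1 tau2" and "\<omega> \<equiv> of_real (hopf_freq tau1 tau2)"
  shows "exp (- 2 * \<i> * \<omega> * of_real (delays tau1 tau2 0)) = 1"
    and "exp (- 2 * \<i> * \<omega> * of_real (delays tau1 tau2 1)) = Complex (- cos (2 * \<phi>)) (sin (2 * \<phi>))"
    and "exp (- 2 * \<i> * \<omega> * of_real (delays tau1 tau2 2)) = Complex (- cos (2 * \<phi>)) (- sin (2 * \<phi>))"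
proof -
  have "2 * hopf_freq tau1 tau2 * tau1 = pi + 2 * \<phi>" "2 * hopf_freq tau1 tau2 * tau2 = pi - 2 * \<phi>"
    using hopf_freq_mult_delays[OF assms(1)] unfolding \<phi>_def by (simp_all add: algebra_simps)
  then show "exp (- 2 * \<i> * \<omega> * of_real (delays tau1 tau2 0)) = 1"
    and "exp (- 2 * \<i> * \<omega> * of_real (delays tau1 tau2 1)) = Complex (- cos (2 * \<phi>)) (sin (2 * \<phi>))"
    and "exp (- 2 * \<i> * \<omega> * of_real (delays tau1 tau2 2)) = Complex (- cos (2 * \<phi>)) (- sin (2 * \<phi>))"
    unfolding delays_def \<omega>_def by (simp_all add: exp_imaginary cos_diff sin_diff)
qed

definition nf_coeff :: "rhs \<Rightarrow> real \<Rightarrow> real \<Rightarrow> real \<Rightarrow> (nat \<Rightarrow> complex) \<Rightarrow> (nat \<Rightarrow> complex) \<Rightarrow> complex" where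
  "nf_coeff F tau1 tau2 \<omega> p p' = cbil F p p' / charfun_deriv F tau1 tau2 (\<i> * of_real \<omega>)"

definition centre_w20 :: "rhs \<Rightarrow> real \<Rightarrow> real \<Rightarrow> real \<Rightarrow> nat \<Rightarrow> complex" where
  "centre_w20 F tau1 tau2 \<omega> j =
     (let q = crit_eigvec tau1 tau2 \<omega>; qb = (\<lambda>j. cnj (q j)); w = of_real \<omega>
      in \<i> * nf_coeff F tau1 tau2 \<omega> q q / w * q j + \<i> * cnj (nf_coeff F tau1 tau2 \<omega> qb qb) / (3 * w) * qb j
         + cbil F q q / charfun F tau1 tau2 (2 * \<i> * w) * exp (- 2 * \<i> * w * of_real (delays tau1 tau2 j)))"

definition centre_w11 :: "rhs \<Rightarrow> real \<Rightarrow> real \<Rightarrow> real \<Rightarrow> nat \<Rightarrow> complex" where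
  "centre_w11 F tau1 tau2 \<omega> j =
     (let q = crit_eigvec tau1 tau2 \<omega>; qb = (\<lambda>j. cnj (q j)); w = of_real \<omega>
      in - \<i> * nf_coeff F tau1 tau2 \<omega> q qb / w * q j + \<i> * cnj (nf_coeff F tau1 tau2 \<omega> q qb) / w * qb j
         + cbil F q qb / charfun F tau1 tau2 0)"

definition nf_g21 :: "rhs \<Rightarrow> real \<Rightarrow> real \<Rightarrow> real \<Rightarrow> complex" where
  "nf_g21 F tau1 tau2 \<omega> =
     (let q = crit_eigvec tau1 tau2 \<omega>; qb = (\<lambda>j. cnj (q j))
      in (2 * cbil F q (centre_w11 F tau1 tau2 \<omega>) + cbil F qb (centre_w20 F tau1 tau2 \<omega>) + ctril F q q qb)
         / charfun_deriv F tau1 tau2 (\<i> * of_real \<omega>))"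

lemma first_lyap_eq:
  fixes F :: rhs and tau1 tau2 \<omega> :: real
  defines "q \<equiv> crit_eigvec tau1 tau2 \<omega>"
  defines "g20 \<equiv> nf_coeff F tau1 tau2 \<omega> q q"
    and "g11 \<equiv> nf_coeff F tau1 tau2 \<omega> q (\<lambda>j. cnj (q j))"
    and "g02 \<equiv> nf_coeff F tau1 tau2 \<omega> (\<lambda>j. cnj (q j)) (\<lambda>j. cnj (q j))"
  shows "first_lyap F tau1 tau2 \<omega> =
           \<i> / (2 * of_real \<omega>) * (g20 * g11 - 2 * (of_real (cmod g11))\<^sup>2 - (of_real (cmod g02))\<^sup>2 / 3)
           + nf_g21 F tau1 tau2 \<omega> / 2"
proof -
  have div: "1 / a * b = b / a" for a b :: complex
    by simp
  have "q = (\<lambda>j. exp (- \<i> * of_real \<omega> * of_real (delays tau1 tau2 j)))"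
    unfolding q_def crit_eigvec_def ..
  then show ?thesis
    unfolding first_lyap_def Let_def nf_g21_def centre_w20_def centre_w11_def g20_def g11_def g02_def
      nf_coeff_def div q_def by simp
qed

lemma Re_first_lyap:
  fixes F :: rhs and tau1 tau2 \<omega> :: real
  defines "q \<equiv> crit_eigvec tau1 tau2 \<omega>"
  shows "Re (first_lyap F tau1 tau2 \<omega>) =
           - Im (nf_coeff F tau1 tau2 \<omega> q q * nf_coeff F tau1 tau2 \<omega> q (\<lambda>j. cnj (q j))) / (2 * \<omega>)
           + Re (nf_g21 F tau1 tau2 \<omega>) / 2"
proof -
  have "Re (\<i> / (2 * of_real \<omega>) * (X - 2 * (of_real a)\<^sup>2 - (of_real b)\<^sup>2 / 3)) = - Im X / (2 * \<omega>)" for X a b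
    by (simp add: Re_divide Im_divide power2_eq_square)
  then show ?thesis
    unfolding first_lyap_eq q_def by simp
qed

lemma sum_lessThan_3: "(\<Sum>j<3. f j) = f 0 + f 1 + f (2::nat)"
  by (simp add: eval_nat_numeral)

lemma hopf_phase_eq: "tau1 + tau2 \<noteq> 0 \<Longrightarrow> hopf_phase tau1 tau2 = hopf_freq tau1 tau2 * (tau1 - tau2) / 2"
  by (simp add: hopf_phase_def hopf_freq_def)

text \<open>Linearization at kappa_c: u0' = - A (u1 + u2) with A (tau1 + tau2) cos phi = pi / 2,
  which has the characteristic roots \<plusminus>i omega.\<close>
locale hopf_crit =
  fixes F :: rhs and tau1 tau2 :: real
  assumes tau1_pos: "tau1 > 0" and tau2_pos: "tau2 > 0"
    and linc_0: "linc F 0 = 0"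
    and linc_1: "linc F 1 = - hopf_freq tau1 tau2 / (2 * cos (hopf_phase tau1 tau2))"
    and linc_2: "linc F 2 = - hopf_freq tau1 tau2 / (2 * cos (hopf_phase tau1 tau2))"
begin

lemma delay_sum_nonzero: "tau1 + tau2 \<noteq> 0"
  using tau1_pos tau2_pos by simp

lemma cos_phase_nonzero: "cos (hopf_phase tau1 tau2) \<noteq> 0"
  using cos_hopf_phase_pos tau1_pos tau2_pos by force

lemmas eigvec = crit_eigvec_values[OF delay_sum_nonzero] crit_eigvec_double_values[OF delay_sum_nonzero]

lemma exp_crit_eigvec:
  "exp (- (\<i> * of_real (hopf_freq tau1 tau2)) * of_real (delays tau1 tau2 j)) =
     crit_eigvec tau1 tau2 (hopf_freq tau1 tau2) j"
  by (simp add: crit_eigvec_def)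

lemma charfun_deriv_crit:
  defines "\<phi> \<equiv> hopf_phase tau1 tau2"
  shows "charfun_deriv F tau1 tau2 (\<i> * of_real (hopf_freq tau1 tau2)) = Complex (1 + \<phi> * tan \<phi>) (pi / 2)"
proof -
  have "charfun_deriv F tau1 tau2 (\<i> * of_real (hopf_freq tau1 tau2))
      = 1 + (\<Sum>j<3. of_real (linc F j * delays tau1 tau2 j) * crit_eigvec tau1 tau2 (hopf_freq tau1 tau2) j)"
    unfolding charfun_deriv_def exp_crit_eigvec ..
  also have "\<dots> = Complex (1 + hopf_freq tau1 tau2 * (tau1 - tau2) / 2 * sin \<phi> / cos \<phi>)
                           (hopf_freq tau1 tau2 * (tau1 + tau2) / 2)"
    unfolding sum_lessThan_3 eigvec linc_0 linc_1 linc_2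
    using cos_phase_nonzero by (simp add: complex_eq_iff delays_def \<phi>_def field_simps)
  also have "\<dots> = Complex (1 + \<phi> * tan \<phi>) (pi / 2)"
    unfolding hopf_phase_eq[OF delay_sum_nonzero, symmetric, folded \<phi>_def]
    using delay_sum_nonzero by (simp add: tan_def hopf_freq_def)
  finally show ?thesis .
qed

lemma charfun_double_crit:
  defines "\<phi> \<equiv> hopf_phase tau1 tau2"
  shows "charfun F tau1 tau2 (2 * \<i> * of_real (hopf_freq tau1 tau2)) =
           of_real (hopf_freq tau1 tau2 / cos \<phi>) * Complex (- cos (2 * \<phi>)) (2 * cos \<phi>)"
proof -
  have exp2: "exp (- (2 * \<i> * of_real (hopf_freq tau1 tau2)) * of_real (delays tau1 tau2 j))
      = exp (- 2 * \<i> * of_real (hopf_freq tau1 tau2) * of_real (delays tau1 tau2 j))" for j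
    by simp
  show ?thesis
    unfolding charfun_def sum_lessThan_3 exp2 eigvec linc_0 linc_1 linc_2
    using cos_phase_nonzero by (simp add: complex_eq_iff \<phi>_def field_simps)
qed

lemma charfun_zero_crit:
  "charfun F tau1 tau2 0 = of_real (hopf_freq tau1 tau2 / cos (hopf_phase tau1 tau2))"
  unfolding charfun_def sum_lessThan_3 linc_0 linc_1 linc_2 by simp

lemma hopf_transversal:
  "Re ((\<Sum>j<3. of_real (linc F j) * crit_eigvec tau1 tau2 (hopf_freq tau1 tau2) j)
       / charfun_deriv F tau1 tau2 (\<i> * of_real (hopf_freq tau1 tau2))) > 0"
proof -
  have "(\<Sum>j<3. of_real (linc F j) * crit_eigvec tau1 tau2 (hopf_freq tau1 tau2) j)
      = Complex 0 (hopf_freq tau1 tau2)"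
    unfolding sum_lessThan_3 eigvec linc_0 linc_1 linc_2
    using cos_phase_nonzero by (simp add: complex_eq_iff)
  moreover have "Re (Complex 0 y / Complex x (pi / 2)) > 0" if "y > 0" for x y
    using that by (simp add: Re_divide add_nonneg_pos)
  moreover have "hopf_freq tau1 tau2 > 0"
    using tau1_pos tau2_pos by (simp add: hopf_freq_def)
  ultimately show ?thesis
    unfolding charfun_deriv_crit by simp
qed

end

section \<open>Product nonlinearity: the model without queue feedback\<close>

lemma mult_sin_self_nonneg:
  fixes x :: real
  assumes "\<bar>x\<bar> \<le> pi"
  shows "0 \<le> x * sin x"
proof (cases "x \<ge> 0")
  case True
  then show ?thesis using assms by (simp add: sin_ge_zero)
next
  case False
  then have "0 \<le> sin (- x)" using assms by (intro sin_ge_zero) auto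
  then show ?thesis using False by (simp add: mult_nonpos_nonpos)
qed

lemma crit_phase_inequality:
  fixes \<phi> :: real
  assumes "\<bar>\<phi>\<bar> < pi / 2"
  defines "c \<equiv> cos \<phi>" and "d \<equiv> cos (2 * \<phi>)"
  shows "pi * c\<^sup>2 + pi * d\<^sup>2 / 2 - (c + \<phi> * sin \<phi>) * d > 0"
proof -
  have "0 \<le> \<phi> * sin \<phi>"
    using assms by (intro mult_sin_self_nonneg) simp
  moreover have "\<phi> * sin \<phi> \<le> pi / 2"
  proof -
    have "\<phi> * sin \<phi> \<le> \<bar>\<phi>\<bar> * \<bar>sin \<phi>\<bar>" by (simp add: abs_mult[symmetric])
    also have "\<dots> \<le> \<bar>\<phi>\<bar>" by (simp add: mult_left_le)
    finally show ?thesis using assms by simp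
  qed
  moreover have "0 < c" "c \<le> 1"
    using assms by (auto simp: c_def abs_less_iff intro: cos_gt_zero_pi)
  ultimately have uc: "0 \<le> c + \<phi> * sin \<phi>" "c + \<phi> * sin \<phi> \<le> 1 + pi / 2"
    by linarith+
  have "d = 2 * c\<^sup>2 - 1"
    unfolding c_def d_def by (rule cos_double_cos)
  then have c2: "pi * c\<^sup>2 = pi / 2 * (1 + d)"
    by (simp add: algebra_simps)
  show ?thesis
  proof (cases "d \<ge> 0")
    case True
    have "(c + \<phi> * sin \<phi>) * d \<le> (1 + pi / 2) * d"
      using uc True by (intro mult_right_mono) auto
    moreover have "d < pi / 2 * (1 + d\<^sup>2)"
    proof -
      have "d < 1 + d\<^sup>2" using zero_le_power2[of "d - 1/2"] by (simp add: power2_eq_square algebra_simps)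
      also have "\<dots> \<le> pi / 2 * (1 + d\<^sup>2)" using pi_gt3 mult_right_mono[of 1 "pi / 2" "1 + d\<^sup>2"] by simp
      finally show ?thesis .
    qed
    ultimately show ?thesis using c2 by (simp add: algebra_simps)
  next
    case False
    then have "(c + \<phi> * sin \<phi>) * d \<le> 0" using uc by (simp add: mult_nonneg_nonpos)
    moreover have "0 < pi / 2 * (1 + d + d\<^sup>2)"
      using zero_le_power2[of "d + 1/2"] by (intro mult_pos_pos) (auto simp: power2_eq_square algebra_simps)
    ultimately show ?thesis using c2 by (simp add: algebra_simps)
  qed
qed

lemma crit_phase_quotient_pos:
  fixes \<phi> :: real
  assumes "\<bar>\<phi>\<bar> < pi / 2"
  defines "c \<equiv> cos \<phi>" and "d \<equiv> cos (2 * \<phi>)"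
  shows "Re (Complex (- c) (- d) / (Complex (1 + \<phi> * tan \<phi>) (pi / 2) * Complex (- d) (2 * c))) > 0"
proof -
  let ?M = "Complex (1 + \<phi> * tan \<phi>) (pi / 2) * Complex (- d) (2 * c)"
  have "c > 0" using assms by (auto simp: c_def abs_less_iff intro: cos_gt_zero_pi)
  then have "Complex (1 + \<phi> * tan \<phi>) (pi / 2) \<noteq> 0" "Complex (- d) (2 * c) \<noteq> 0"
    by (simp_all add: complex_eq_iff)
  then have "?M \<noteq> 0" by simp
  then have "(Re ?M)\<^sup>2 + (Im ?M)\<^sup>2 > 0" by (simp add: complex_eq_iff sum_power2_gt_zero_iff)
  moreover have "- c * Re ?M + - d * Im ?M = pi * c\<^sup>2 + pi * d\<^sup>2 / 2 - (c + \<phi> * sin \<phi>) * d"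
    using \<open>c > 0\<close> by (simp add: tan_def c_def field_simps power2_eq_square)
  ultimately show ?thesis
    using crit_phase_inequality[OF assms(1)] unfolding Re_divide c_def d_def by simp
qed

text \<open>Abstracts the model without queue feedback, whose nonlinearity at the equilibrium is
  the pure product -beta u0 (u1 + u2).\<close>
locale hopf_crit_product = hopf_crit +
  fixes \<beta> :: real
  assumes cbil_product: "\<And>p p'. cbil F p p' = - of_real \<beta> * (p 0 * (p' 1 + p' 2) + p' 0 * (p 1 + p 2))"
    and ctril_zero: "\<And>p p' p''. ctril F p p' p'' = 0"
begin

abbreviation \<omega> :: real where "\<omega> \<equiv> hopf_freq tau1 tau2"
abbreviation \<phi> :: real where "\<phi> \<equiv> hopf_phase tau1 tau2"
abbreviation q :: "nat \<Rightarrow> complex" where "q \<equiv> crit_eigvec tau1 tau2 \<omega>"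
abbreviation qb :: "nat \<Rightarrow> complex" where "qb \<equiv> \<lambda>j. cnj (q j)"
abbreviation e2 :: "nat \<Rightarrow> complex" where
  "e2 \<equiv> \<lambda>j. exp (- 2 * \<i> * of_real \<omega> * of_real (delays tau1 tau2 j))"

lemma cbil_product_eigvec:
  "cbil F q q = \<i> * of_real (4 * \<beta> * cos \<phi>)" "cbil F q qb = 0" "cbil F qb q = 0"
  "cbil F qb qb = - \<i> * of_real (4 * \<beta> * cos \<phi>)"
  "cbil F qb e2 = - 2 * of_real \<beta> * Complex (- cos (2 * \<phi>)) (cos \<phi>)"
  unfolding cbil_product eigvec by (simp_all add: complex_eq_iff)

lemma centre_w11_product: "centre_w11 F tau1 tau2 \<omega> = (\<lambda>_. 0)"
  by (rule ext) (simp add: centre_w11_def nf_coeff_def Let_def cbil_product_eigvec)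

lemma nf_g21_product:
  "nf_g21 F tau1 tau2 \<omega> =
     (\<i> * cnj (nf_coeff F tau1 tau2 \<omega> qb qb) / (3 * of_real \<omega>) * cbil F qb qb
      + cbil F q q / charfun F tau1 tau2 (2 * \<i> * of_real \<omega>) * cbil F qb e2)
     / charfun_deriv F tau1 tau2 (\<i> * of_real \<omega>)"
proof -
  have w20: "centre_w20 F tau1 tau2 \<omega> = (\<lambda>j.
      (\<i> * nf_coeff F tau1 tau2 \<omega> q q / of_real \<omega>) * q j
      + (\<i> * cnj (nf_coeff F tau1 tau2 \<omega> qb qb) / (3 * of_real \<omega>)) * qb j
      + (cbil F q q / charfun F tau1 tau2 (2 * \<i> * of_real \<omega>)) * e2 j)"
    by (simp add: centre_w20_def Let_def fun_eq_iff)
  have lin: "cbil F qb (\<lambda>j. x * q j + y * qb j + z * e2 j) = x * cbil F qb q + y * cbil F qb qb + z * cbil F qb e2"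
    for x y z
    unfolding cbil_product by (simp add: algebra_simps)
  have "cbil F p (\<lambda>_. 0) = 0" for p
    unfolding cbil_product by simp
  then show ?thesis
    unfolding nf_g21_def Let_def centre_w11_product w20 lin ctril_zero cbil_product_eigvec(3)
    by simp
qed

text \<open>Only the resonant term E1 exp(-2 i omega theta) of w20 contributes: the q-component of w20
  is annihilated by cbil qb, and the qb-component yields a real multiple of i / |Delta'|^2.\<close>
lemma Re_nf_g21_product:
  "Re (nf_g21 F tau1 tau2 \<omega>) = - 8 * \<beta>\<^sup>2 * (cos \<phi>)\<^sup>2 / \<omega> * Re (Complex (- cos \<phi>) (- cos (2 * \<phi>))
     / (Complex (1 + \<phi> * tan \<phi>) (pi / 2) * Complex (- cos (2 * \<phi>)) (2 * cos \<phi>)))"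
proof -
  define c where "c = cos \<phi>"
  define d where "d = cos (2 * \<phi>)"
  define Z where "Z = 4 * \<beta> * c"
  define Dp where "Dp = Complex (1 + \<phi> * tan \<phi>) (pi / 2)"
  define V where "V = Complex (- d) (2 * c)"
  have c: "c \<noteq> 0" using cos_phase_nonzero by (simp add: c_def)
  have \<omega>: "\<omega> > 0" using tau1_pos tau2_pos by (simp add: hopf_freq_def)
  have Dp: "Dp \<noteq> 0" by (simp add: Dp_def complex_eq_iff)
  have cd: "charfun_deriv F tau1 tau2 (\<i> * of_real \<omega>) = Dp"
    unfolding Dp_def by (rule charfun_deriv_crit)
  have cf2: "charfun F tau1 tau2 (2 * \<i> * of_real \<omega>) = of_real (\<omega> / c) * V"
    unfolding V_def c_def d_def by (rule charfun_double_crit)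
  have "\<i> * cnj (nf_coeff F tau1 tau2 \<omega> qb qb) / (3 * of_real \<omega>) * cbil F qb qb / Dp
      = \<i> * of_real (Z\<^sup>2 / (3 * \<omega>)) / (Dp * cnj Dp)"
    unfolding cbil_product_eigvec nf_coeff_def cd Z_def c_def using Dp \<omega>
    by (simp add: field_simps power2_eq_square)
  then have Re_w20_qb: "Re (\<i> * cnj (nf_coeff F tau1 tau2 \<omega> qb qb) / (3 * of_real \<omega>) * cbil F qb qb / Dp) = 0"
    by (simp add: complex_mult_cnj del: of_real_power)
  have "Complex (- c) (- d) = \<i> * Complex (- d) c" by (simp add: complex_eq_iff)
  then have w20_e2: "cbil F q q / charfun F tau1 tau2 (2 * \<i> * of_real \<omega>) * cbil F qb e2 / Dp
      = of_real (- 2 * \<beta> * Z * c / \<omega>) * (Complex (- c) (- d) / (Dp * V))"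
    unfolding cbil_product_eigvec cf2 Z_def c_def d_def using c \<omega> Dp by (simp add: field_simps c_def)
  have Re_scale: "Re (of_real r * z) = r * Re z" for r z
    by simp
  have "Re (nf_g21 F tau1 tau2 \<omega>) = - 2 * \<beta> * Z * c / \<omega> * Re (Complex (- c) (- d) / (Dp * V))"
    unfolding nf_g21_product cd add_divide_distrib plus_complex.sel Re_w20_qb w20_e2
    by (simp only: Re_scale add_0_left)
  then show ?thesis
    by (simp add: Z_def Dp_def V_def c_def d_def power2_eq_square)
qed

lemma Re_first_lyap_product_neg:
  assumes "\<beta> \<noteq> 0"
  shows "Re (first_lyap F tau1 tau2 \<omega>) < 0"
proof -
  have "Re (first_lyap F tau1 tau2 \<omega>) = - 4 * \<beta>\<^sup>2 * (cos \<phi>)\<^sup>2 / \<omega> * Re (Complex (- cos \<phi>) (- cos (2 * \<phi>))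
     / (Complex (1 + \<phi> * tan \<phi>) (pi / 2) * Complex (- cos (2 * \<phi>)) (2 * cos \<phi>)))"
    unfolding Re_first_lyap nf_coeff_def cbil_product_eigvec Re_nf_g21_product by simp
  moreover have "\<omega> > 0" using tau1_pos tau2_pos by (simp add: hopf_freq_def)
  ultimately show ?thesis
    using assms cos_phase_nonzero crit_phase_quotient_pos[OF abs_hopf_phase_less[OF tau1_pos tau2_pos]]
    by (simp add: mult_pos_pos divide_pos_pos)
qed

end

section \<open>The two RCP models\<close>

lemma rcp_dev_eq_feedback_rhs:
  "rcp_dev C \<gamma> a tau1 tau2 =
     (\<lambda>k. feedback_rhs (k * (2 * a / (\<gamma> * C * (tau1 + tau2)))) (\<gamma> * C / 2) (\<gamma> * C) 0 (\<gamma> * C + 1) (\<gamma> * C))"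
  by (intro ext) (simp add: rcp_dev_def rcp_rhs_def feedback_rhs_def algebra_simps)

lemma rcpq_dev_eq_feedback_rhs:
  "rcpq_dev C a b tau1 tau2 =
     (\<lambda>k. feedback_rhs (k * (2 * a / (C * (tau1 + tau2)))) (Rstar C b) C (b * C / 2) C (2 * Rstar C b))"
proof (intro ext)
  fix k u0 u1 u2
  let ?y = "2 * Rstar C b + (u1 + u2)"
  have "b * C * pq C ?y = b * C / 2 * ?y / (C - ?y)"
    by (simp add: pq_def)
  then show "rcpq_dev C a b tau1 tau2 k u0 u1 u2 =
      feedback_rhs (k * (2 * a / (C * (tau1 + tau2)))) (Rstar C b) C (b * C / 2) C (2 * Rstar C b) u0 u1 u2"
    by (simp add: rcpq_dev_def rcpq_rhs_def feedback_rhs_def algebra_simps)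
qed

lemma Rstar_bounds:
  assumes "C > 0" "b > 0"
  shows "0 < Rstar C b" "2 * Rstar C b < C"
proof -
  have "sqrt (b\<^sup>2 + 8 * b) < 4 + b"
    using assms by (intro real_less_lsqrt) (auto simp: power2_eq_square algebra_simps)
  moreover have "b < sqrt (b\<^sup>2 + 8 * b)"
    using assms by (intro real_less_rsqrt) (auto simp: power2_eq_square)
  ultimately show "0 < Rstar C b" "2 * Rstar C b < C"
    using assms by (simp_all add: Rstar_def)
qed

lemma sgn_mu2_q_independent_of_gain:
  assumes "C > 0" "a > 0" "a' > 0" "b > 0" "tau1 > 0" "tau2 > 0"
  shows "sgn (mu2_q C a b tau1 tau2) = sgn (mu2_q C a' b tau1 tau2)"
proof -
  let ?R = "Rstar C b" and ?T = "tau1 + tau2"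
  define W where "W = 1 + 2 * ?R / C"
  define K where "K = hopf_freq tau1 tau2 / (cos (hopf_phase tau1 tau2) * C * W)"
  define F where "F = feedback_rhs K ?R C (b * C / 2) C (2 * ?R)"
  define \<Phi> where "\<Phi> = - Re (first_lyap F tau1 tau2 (hopf_freq tau1 tau2))
      / Re ((\<Sum>j<3. of_real (linc F j) * crit_eigvec tau1 tau2 (hopf_freq tau1 tau2) j)
            / charfun_deriv F tau1 tau2 (\<i> * of_real (hopf_freq tau1 tau2)))"
  have R: "0 < ?R" "C - 2 * ?R \<noteq> 0" using Rstar_bounds assms(1,4) by force+
  have W: "W > 0" using R assms(1) by (simp add: W_def add_pos_pos)
  have kc_pos: "kappa_crit (atilde_q C x b tau1 tau2) tau1 tau2 > 0" if "x > 0" for x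
    using that assms W kappa_crit_pos by (simp add: atilde_q_def W_def)
  have "mu2_q C x b tau1 tau2 = kappa_crit (atilde_q C x b tau1 tau2) tau1 tau2 * \<Phi>" if "x > 0" for x
  proof -
    let ?kc = "kappa_crit (atilde_q C x b tau1 tau2) tau1 tau2"
    have "2 * x / (C * T) = x / T * W * (2 / (C * W))" if "T > 0" for T
      using that assms(1) W by (simp add: field_simps)
    then have "?kc * (2 * x / (C * ?T)) = ?kc * atilde_q C x b tau1 tau2 * (2 / (C * W))"
      using assms by (simp add: atilde_q_def W_def)
    also have "\<dots> = K"
      using kappa_crit_mult[of "atilde_q C x b tau1 tau2"] that assms W
      by (simp add: atilde_q_def W_def[symmetric] K_def)
    finally have K: "?kc * (2 * x / (C * ?T)) = K" .
    have kc: "?kc \<noteq> 0" using kc_pos[OF that] by simp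
    have "mu2_q C x b tau1 tau2 = - ?kc * Re (first_lyap F tau1 tau2 (hopf_freq tau1 tau2))
      / Re ((\<Sum>j<3. of_real (linc F j) * crit_eigvec tau1 tau2 (hopf_freq tau1 tau2) j)
            / charfun_deriv F tau1 tau2 (\<i> * of_real (hopf_freq tau1 tau2)))"
      unfolding mu2_q_def rcpq_dev_eq_feedback_rhs
        mu2_linear_family[OF linc_feedback_rhs_scaled[OF R(2)] kc] K F_def ..
    then show ?thesis
      by (simp add: \<Phi>_def)
  qed
  then show ?thesis
    using assms(2,3) kc_pos by (simp add: sgn_mult)
qed

lemma rcp_dev_hopf_crit_product:
  assumes C: "C > 0" and \<gamma>: "\<gamma> > 0" and a: "a > 0" and tau: "tau1 > 0" "tau2 > 0"
  defines "kc \<equiv> kappa_crit (a / (tau1 + tau2)) tau1 tau2"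
  shows "hopf_crit_product (rcp_dev C \<gamma> a tau1 tau2 kc) tau1 tau2 (kc * (2 * a / (\<gamma> * C * (tau1 + tau2))))"
proof -
  have scale: "kc * (2 * a / (\<gamma> * C * T)) * (\<gamma> * C / 2) = kc * (a / T)" if "T > 0" for T
    using that \<gamma> C by (simp add: field_simps)
  have "kc * (2 * a / (\<gamma> * C * (tau1 + tau2))) * (\<gamma> * C / 2) = kc * (a / (tau1 + tau2))"
    by (rule scale) (use tau in simp)
  also have "\<dots> = hopf_freq tau1 tau2 / (2 * cos (hopf_phase tau1 tau2))"
    unfolding kc_def by (rule kappa_crit_mult) (use a tau in auto)
  finally have "kc * (2 * a / (\<gamma> * C * (tau1 + tau2))) * (\<gamma> * C / 2)
      = hopf_freq tau1 tau2 / (2 * cos (hopf_phase tau1 tau2))" .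
  moreover have EY: "\<gamma> * C + 1 - \<gamma> * C \<noteq> 0" by simp
  ultimately show ?thesis
    unfolding rcp_dev_eq_feedback_rhs
    by unfold_locales (use tau in \<open>simp_all add: feedback_rhs_no_queue[OF EY] unitv_def\<close>)
qed

lemma mu2_nq_pos:
  assumes "C > 0" "0 < \<gamma>" "a > 0" "tau1 > 0" "tau2 > 0"
  shows "mu2_nq C \<gamma> a tau1 tau2 > 0"
proof -
  define kc where "kc = kappa_crit (a / (tau1 + tau2)) tau1 tau2"
  define K where "K = kc * (2 * a / (\<gamma> * C * (tau1 + tau2)))"
  interpret hopf_crit_product "rcp_dev C \<gamma> a tau1 tau2 kc" tau1 tau2 K
    unfolding kc_def K_def using assms by (rule rcp_dev_hopf_crit_product)
  have kc: "kc > 0" using kappa_crit_pos assms by (simp add: kc_def)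
  have lin: "linc (rcp_dev C \<gamma> a tau1 tau2 k) j = k * linc (rcp_dev C \<gamma> a tau1 tau2 1) j" for k j
    unfolding rcp_dev_eq_feedback_rhs mult_1_left by (rule linc_feedback_rhs_scaled) simp
  have "K \<noteq> 0" using kc assms by (simp add: K_def)
  then have "Re (first_lyap (rcp_dev C \<gamma> a tau1 tau2 kc) tau1 tau2 (hopf_freq tau1 tau2)) < 0"
    by (rule Re_first_lyap_product_neg)
  moreover have "mu2_nq C \<gamma> a tau1 tau2 = - kc * Re (first_lyap (rcp_dev C \<gamma> a tau1 tau2 kc) tau1 tau2 (hopf_freq tau1 tau2))
      / Re ((\<Sum>j<3. of_real (linc (rcp_dev C \<gamma> a tau1 tau2 kc) j) * crit_eigvec tau1 tau2 (hopf_freq tau1 tau2) j)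
            / charfun_deriv (rcp_dev C \<gamma> a tau1 tau2 kc) tau1 tau2 (\<i> * of_real (hopf_freq tau1 tau2)))"
    unfolding mu2_nq_def kc_def[symmetric] by (rule mu2_linear_family[OF lin]) (use kc in simp)
  ultimately show ?thesis
    using kc hopf_transversal by (simp add: mult_pos_neg divide_neg_pos)
qed

section \<open>A sub-critical example: b = 1/6, tau1 = tau2 = 1\<close>

lemma Rstar_one_sixth: "Rstar C (1/6) = 3 * C / 8"
proof -
  have "sqrt ((1/6)\<^sup>2 + 8 * (1/6::real)) = 7/6"
    by (rule real_sqrt_unique) (simp_all add: power2_eq_square)
  then show ?thesis
    unfolding Rstar_def by simp
qed

lemma inverse_Complex_1_pi_half:
  "inverse (Complex 1 (pi / 2)) = Complex (4 / (4 + pi\<^sup>2)) (- 2 * pi / (4 + pi\<^sup>2))"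
proof (rule inverse_unique)
  define N where "N = 4 + pi\<^sup>2"
  have N: "N > 0" unfolding N_def by (simp add: add_pos_nonneg)
  then have "Complex 1 (pi / 2) * Complex (4 / N) (- 2 * pi / N) = of_real ((4 + pi\<^sup>2) / N)"
    by (simp add: complex_eq_iff field_simps power2_eq_square)
  also have "\<dots> = 1"
    using N by (simp add: N_def)
  finally show "Complex 1 (pi / 2) * Complex (4 / (4 + pi\<^sup>2)) (- 2 * pi / (4 + pi\<^sup>2)) = 1"
    by (simp only: N_def)
qed

lemma hopf_phase_1_1: "hopf_phase 1 1 = 0"
  by (simp add: hopf_phase_def)

lemma hopf_freq_1_1: "hopf_freq 1 1 = pi / 2"
  by (simp add: hopf_freq_def)

text \<open>The rhs of the queue model for b = 1/6, tau1 = tau2 = 1 at kappa = kappa_c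
  (then R* = 3 C / 8 and kappa_c times the gain 2 a / (2 C) is 2 pi / (7 C)).\<close>
definition example_rhs :: "real \<Rightarrow> rhs" where
  "example_rhs C = feedback_rhs (2 * pi / (7 * C)) (3 * C / 8) C (C / 12) C (3 * C / 4)"

locale rcp_example =
  fixes C :: real
  assumes C_pos: "C > 0"
begin

abbreviation q :: "nat \<Rightarrow> complex" where
  "q \<equiv> crit_eigvec 1 1 (hopf_freq 1 1)"

abbreviation qb :: "nat \<Rightarrow> complex" where
  "qb \<equiv> \<lambda>j. cnj (q j)"

lemma example_pole_nonzero: "C - 3 * C / 4 \<noteq> 0"
  using C_pos by simp

lemma example_feedback_coeffs:
  "feedback_d0 C (C / 12) C (3 * C / 4) = 0" "feedback_d1 (C / 12) C (3 * C / 4) = - 7 / 3"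
  "feedback_d2 (C / 12) C (3 * C / 4) = - 32 / (3 * C)" "feedback_d3 (C / 12) C (3 * C / 4) = - 128 / C\<^sup>2"
  using C_pos
  by (simp_all add: feedback_d0_def feedback_d1_def feedback_d2_def feedback_d3_def field_simps
      power2_eq_square power3_eq_cube power4_eq_xxxx)

sublocale hopf_crit "example_rhs C" 1 1
  by unfold_locales
    (use C_pos in \<open>simp_all add: example_rhs_def linc_feedback_rhs[OF example_pole_nonzero]
       example_feedback_coeffs unitv_def hopf_phase_1_1 hopf_freq_1_1\<close>)

lemma example_cbil:
  "cbil (example_rhs C) p p' = - of_real (2 * pi / (3 * C)) * (p 0 * (p' 1 + p' 2) + p' 0 * (p 1 + p 2))
     - of_real (8 * pi / (7 * C)) * (p 1 + p 2) * (p' 1 + p' 2)"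
  unfolding example_rhs_def cbil_feedback_rhs[OF example_pole_nonzero] example_feedback_coeffs
  using C_pos by (simp add: field_simps)

lemma example_ctril:
  "ctril (example_rhs C) p p' p'' = - of_real (64 * pi / (21 * C\<^sup>2)) * (p 0 * (p' 1 + p' 2) * (p'' 1 + p'' 2)
       + p' 0 * (p 1 + p 2) * (p'' 1 + p'' 2) + p'' 0 * (p 1 + p 2) * (p' 1 + p' 2))
     - of_real (96 * pi / (7 * C\<^sup>2)) * (p 1 + p 2) * (p' 1 + p' 2) * (p'' 1 + p'' 2)"
  unfolding example_rhs_def ctril_feedback_rhs[OF example_pole_nonzero] example_feedback_coeffs
  using C_pos by (simp add: field_simps power2_eq_square)

lemma example_eigvec:
  "q 0 = 1" "q 1 = - \<i>" "q 2 = - \<i>" "qb 0 = 1" "qb 1 = \<i>" "qb 2 = \<i>"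
  "exp (- 2 * \<i> * of_real (hopf_freq 1 1) * of_real (delays 1 1 0)) = 1"
  "exp (- 2 * \<i> * of_real (hopf_freq 1 1) * of_real (delays 1 1 1)) = - 1"
  "exp (- 2 * \<i> * of_real (hopf_freq 1 1) * of_real (delays 1 1 2)) = - 1"
  unfolding eigvec hopf_phase_1_1 by (simp_all add: complex_eq_iff)

lemma example_charfun:
  "charfun_deriv (example_rhs C) 1 1 (\<i> * of_real (hopf_freq 1 1)) = Complex 1 (pi / 2)"
  "charfun (example_rhs C) 1 1 (2 * \<i> * of_real (hopf_freq 1 1)) = Complex (- pi / 2) pi"
  "charfun (example_rhs C) 1 1 0 = of_real (pi / 2)"
  unfolding charfun_deriv_crit charfun_double_crit charfun_zero_crit
  unfolding hopf_phase_1_1 hopf_freq_1_1 by (simp_all add: complex_eq_iff)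

lemma example_cbil_eigvec:
  "cbil (example_rhs C) q q = Complex (32/7 * pi / C) (8/3 * pi / C)"
  "cbil (example_rhs C) q qb = Complex (- 32/7 * pi / C) 0"
  "cbil (example_rhs C) qb qb = Complex (32/7 * pi / C) (- 8/3 * pi / C)"
  "ctril (example_rhs C) q q qb = Complex (- 256/21 * pi / C\<^sup>2) (768/7 * pi / C\<^sup>2)"
  unfolding example_cbil example_ctril example_eigvec
  using C_pos by (simp_all add: complex_eq_iff field_simps power2_eq_square)

lemma example_normal_form_coeffs:
  defines "N \<equiv> 4 + pi\<^sup>2"
  shows "nf_coeff (example_rhs C) 1 1 (hopf_freq 1 1) q q
           = Complex ((128/7 * pi + 16/3 * pi\<^sup>2) / (N * C)) ((32/3 * pi - 64/7 * pi\<^sup>2) / (N * C))"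
    and "nf_coeff (example_rhs C) 1 1 (hopf_freq 1 1) q qb
           = Complex (- 128/7 * pi / (N * C)) (64/7 * pi\<^sup>2 / (N * C))"
    and "nf_coeff (example_rhs C) 1 1 (hopf_freq 1 1) qb qb
           = Complex ((128/7 * pi - 16/3 * pi\<^sup>2) / (N * C)) ((- 32/3 * pi - 64/7 * pi\<^sup>2) / (N * C))"
    and "cbil (example_rhs C) q q / charfun (example_rhs C) 1 1 (2 * \<i> * of_real (hopf_freq 1 1))
           = Complex (32/105 / C) (- 496/105 / C)"
    and "cbil (example_rhs C) q qb / charfun (example_rhs C) 1 1 0 = Complex (- 64/7 / C) 0"
proof -
  have N: "N > 0" unfolding N_def by (simp add: add_pos_nonneg)
  have inv: "z / Complex 1 (pi / 2) = z * Complex (4 / N) (- 2 * pi / N)" for z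
    unfolding N_def inverse_Complex_1_pi_half[symmetric] by (rule divide_inverse)
  show "nf_coeff (example_rhs C) 1 1 (hopf_freq 1 1) q q
           = Complex ((128/7 * pi + 16/3 * pi\<^sup>2) / (N * C)) ((32/3 * pi - 64/7 * pi\<^sup>2) / (N * C))"
    and "nf_coeff (example_rhs C) 1 1 (hopf_freq 1 1) q qb
           = Complex (- 128/7 * pi / (N * C)) (64/7 * pi\<^sup>2 / (N * C))"
    and "nf_coeff (example_rhs C) 1 1 (hopf_freq 1 1) qb qb
           = Complex ((128/7 * pi - 16/3 * pi\<^sup>2) / (N * C)) ((- 32/3 * pi - 64/7 * pi\<^sup>2) / (N * C))"
    unfolding nf_coeff_def example_charfun example_cbil_eigvec inv
    using N C_pos by (simp_all add: complex_eq_iff field_simps power2_eq_square)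
  show "cbil (example_rhs C) q q / charfun (example_rhs C) 1 1 (2 * \<i> * of_real (hopf_freq 1 1))
           = Complex (32/105 / C) (- 496/105 / C)"
    and "cbil (example_rhs C) q qb / charfun (example_rhs C) 1 1 0 = Complex (- 64/7 / C) 0"
    unfolding example_charfun example_cbil_eigvec
    using C_pos by (simp_all add: complex_eq_iff field_simps power2_eq_square Re_divide Im_divide)
qed

lemma example_centre_w20:
  defines "N \<equiv> 4 + pi\<^sup>2"
  shows "centre_w20 (example_rhs C) 1 1 (hopf_freq 1 1) 0 = Complex
           ((- 8576/315 + 256/21 * pi + 32/105 * pi\<^sup>2) / (N * C)) ((448/15 + 64/9 * pi - 496/105 * pi\<^sup>2) / (N * C))"
    and "centre_w20 (example_rhs C) 1 1 (hopf_freq 1 1) 1 = Complex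
           ((2432/105 + 128/9 * pi - 32/105 * pi\<^sup>2) / (N * C)) ((10432/315 - 512/21 * pi + 496/105 * pi\<^sup>2) / (N * C))"
    and "centre_w20 (example_rhs C) 1 1 (hopf_freq 1 1) 2 = Complex
           ((2432/105 + 128/9 * pi - 32/105 * pi\<^sup>2) / (N * C)) ((10432/315 - 512/21 * pi + 496/105 * pi\<^sup>2) / (N * C))"
proof -
  have N: "N > 0" unfolding N_def by (simp add: add_pos_nonneg)
  show "centre_w20 (example_rhs C) 1 1 (hopf_freq 1 1) 0 = Complex
           ((- 8576/315 + 256/21 * pi + 32/105 * pi\<^sup>2) / (N * C)) ((448/15 + 64/9 * pi - 496/105 * pi\<^sup>2) / (N * C))"
    and "centre_w20 (example_rhs C) 1 1 (hopf_freq 1 1) 1 = Complex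
           ((2432/105 + 128/9 * pi - 32/105 * pi\<^sup>2) / (N * C)) ((10432/315 - 512/21 * pi + 496/105 * pi\<^sup>2) / (N * C))"
    and "centre_w20 (example_rhs C) 1 1 (hopf_freq 1 1) 2 = Complex
           ((2432/105 + 128/9 * pi - 32/105 * pi\<^sup>2) / (N * C)) ((10432/315 - 512/21 * pi + 496/105 * pi\<^sup>2) / (N * C))"
    unfolding centre_w20_def Let_def example_normal_form_coeffs[folded N_def] example_eigvec
    unfolding hopf_freq_1_1
    using N C_pos pi_gt_zero
    by (simp add: complex_eq_iff field_simps power2_eq_square power3_eq_cube power4_eq_xxxx;
        simp add: N_def algebra_simps power2_eq_square power3_eq_cube power4_eq_xxxx)+
qed

lemma example_centre_w11:
  defines "N \<equiv> 4 + pi\<^sup>2"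
  shows "centre_w11 (example_rhs C) 1 1 (hopf_freq 1 1) 0 = of_real ((- 256/7 + 256/7 * pi - 64/7 * pi\<^sup>2) / (N * C))"
    and "centre_w11 (example_rhs C) 1 1 (hopf_freq 1 1) 1 = of_real ((256/7 - 64/7 * pi\<^sup>2) / (N * C))"
    and "centre_w11 (example_rhs C) 1 1 (hopf_freq 1 1) 2 = of_real ((256/7 - 64/7 * pi\<^sup>2) / (N * C))"
proof -
  have N: "N > 0" unfolding N_def by (simp add: add_pos_nonneg)
  show "centre_w11 (example_rhs C) 1 1 (hopf_freq 1 1) 0 = of_real ((- 256/7 + 256/7 * pi - 64/7 * pi\<^sup>2) / (N * C))"
    and "centre_w11 (example_rhs C) 1 1 (hopf_freq 1 1) 1 = of_real ((256/7 - 64/7 * pi\<^sup>2) / (N * C))"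
    and "centre_w11 (example_rhs C) 1 1 (hopf_freq 1 1) 2 = of_real ((256/7 - 64/7 * pi\<^sup>2) / (N * C))"
    unfolding centre_w11_def Let_def example_normal_form_coeffs[folded N_def] example_eigvec
    unfolding hopf_freq_1_1
    using N C_pos pi_gt_zero
    by (simp add: complex_eq_iff field_simps power2_eq_square power3_eq_cube power4_eq_xxxx;
        simp add: N_def algebra_simps power2_eq_square power3_eq_cube power4_eq_xxxx)+
qed

lemma example_nf_g21:
  defines "N \<equiv> 4 + pi\<^sup>2"
  shows "nf_g21 (example_rhs C) 1 1 (hopf_freq 1 1) = Complex
    ((123904/2205 * pi + 470528/735 * pi\<^sup>2 + 461056/2205 * pi ^ 3 - 5248/735 * pi ^ 4) / (N\<^sup>2 * C\<^sup>2))
    ((14869504/6615 * pi + 368128/2205 * pi\<^sup>2 + 1505536/6615 * pi ^ 3 - 123008/2205 * pi ^ 4) / (N\<^sup>2 * C\<^sup>2))"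
proof -
  have N: "N > 0" unfolding N_def by (simp add: add_pos_nonneg)
  have cbil_w11: "cbil (example_rhs C) q (centre_w11 (example_rhs C) 1 1 (hopf_freq 1 1)) = Complex
      ((- 1024/21 * pi + 256/21 * pi ^ 3) / (N * C\<^sup>2))
      ((17408/147 * pi + 1024/21 * pi\<^sup>2 - 7936/147 * pi ^ 3) / (N * C\<^sup>2))"
    unfolding example_cbil example_centre_w11[folded N_def] example_eigvec
    using N C_pos
    by (simp add: complex_eq_iff field_simps power2_eq_square power3_eq_cube power4_eq_xxxx;
        simp add: N_def algebra_simps power2_eq_square power3_eq_cube power4_eq_xxxx)
  have cbil_w20: "cbil (example_rhs C) qb (centre_w20 (example_rhs C) 1 1 (hopf_freq 1 1)) = Complex
      ((353536/2205 * pi - 160000/1323 * pi\<^sup>2 + 34624/2205 * pi ^ 3) / (N * C\<^sup>2))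
      ((- 752384/6615 * pi - 1024/21 * pi\<^sup>2 - 3904/735 * pi ^ 3) / (N * C\<^sup>2))"
    unfolding example_cbil example_centre_w20[folded N_def] example_eigvec
    using N C_pos
    by (simp add: complex_eq_iff field_simps power2_eq_square power3_eq_cube power4_eq_xxxx;
        simp add: N_def algebra_simps power2_eq_square power3_eq_cube power4_eq_xxxx)
  have inv: "z / Complex 1 (pi / 2) = z * Complex (4 / N) (- 2 * pi / N)" for z
    unfolding N_def inverse_Complex_1_pi_half[symmetric] by (rule divide_inverse)
  show ?thesis
    unfolding nf_g21_def Let_def cbil_w11 cbil_w20 example_cbil_eigvec example_charfun inv
    using N C_pos
    by (simp add: complex_eq_iff field_simps power2_eq_square power3_eq_cube power4_eq_xxxx;
        simp add: N_def algebra_simps power2_eq_square power3_eq_cube power4_eq_xxxx)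
qed

lemma example_Re_first_lyap_pos: "Re (first_lyap (example_rhs C) 1 1 (hopf_freq 1 1)) > 0"
proof -
  define N where "N = 4 + pi\<^sup>2"
  have N: "N > 0" unfolding N_def by (simp add: add_pos_nonneg)
  have "Re (first_lyap (example_rhs C) 1 1 (hopf_freq 1 1)) = (123008/2205 * pi - 2624/735 * pi\<^sup>2) / (N * C\<^sup>2)"
    unfolding Re_first_lyap example_normal_form_coeffs[folded N_def] example_nf_g21[folded N_def]
    unfolding hopf_freq_1_1
    using N C_pos
    by (simp add: field_simps power2_eq_square power3_eq_cube power4_eq_xxxx;
        simp add: N_def algebra_simps power2_eq_square power3_eq_cube power4_eq_xxxx)
  moreover have "2624/735 * pi < 123008/2205"
    using pi_less_4 by simp
  then have "0 < 123008/2205 * pi - 2624/735 * pi\<^sup>2"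
    using pi_gt_zero by (simp add: power2_eq_square algebra_simps)
  ultimately show ?thesis
    using N C_pos by simp
qed

end

lemma mu2_q_one_sixth_neg:
  assumes "C > 0" "a > 0"
  shows "mu2_q C a (1/6) 1 1 < 0"
proof -
  interpret rcp_example C
    using assms(1) by unfold_locales
  let ?kc = "kappa_crit (atilde_q C a (1/6) 1 1) 1 1"
  have kc: "?kc = 2 * pi / (7 * a)"
    using assms by (simp add: kappa_crit_eq atilde_q_def Rstar_one_sixth hopf_phase_1_1 field_simps)
  then have kc_nz: "?kc \<noteq> 0"
    using assms by simp
  have K: "?kc * (a / C) = 2 * pi / (7 * C)"
    using assms kc by simp
  have family: "rcpq_dev C a (1/6) 1 1 = (\<lambda>k. feedback_rhs (k * (a / C)) (3 * C / 8) C (C / 12) C (3 * C / 4))"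
    unfolding rcpq_dev_eq_feedback_rhs Rstar_one_sixth by simp
  have "mu2_q C a (1/6) 1 1 = - ?kc * Re (first_lyap (example_rhs C) 1 1 (hopf_freq 1 1))
      / Re ((\<Sum>j<3. of_real (linc (example_rhs C) j) * crit_eigvec 1 1 (hopf_freq 1 1) j)
            / charfun_deriv (example_rhs C) 1 1 (\<i> * of_real (hopf_freq 1 1)))"
    unfolding mu2_q_def family K example_rhs_def
      mu2_linear_family[OF linc_feedback_rhs_scaled[OF example_pole_nonzero] kc_nz] ..
  then show ?thesis
    using example_Re_first_lyap_pos hopf_transversal kc assms by (simp add: divide_pos_pos)
qed

theorem mainTheorem8:
  shows "(\<forall>C a a' b tau1 tau2::real. C > 0 \<and> a > 0 \<and> a' > 0 \<and> b > 0 \<and> tau1 > 0 \<and> tau2 > 0 \<longrightarrow>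
            sgn (mu2_q C a b tau1 tau2) = sgn (mu2_q C a' b tau1 tau2))
       \<and> (\<forall>C a::real. C > 0 \<and> a > 0 \<longrightarrow>
            (\<exists>b tau1 tau2::real. b > 0 \<and> tau1 > 0 \<and> tau2 > 0 \<and> mu2_q C a b tau1 tau2 < 0))
       \<and> (\<forall>C \<gamma> a tau1 tau2::real. C > 0 \<and> 0 < \<gamma> \<and> \<gamma> \<le> 1 \<and> a > 0 \<and> tau1 > 0 \<and> tau2 > 0 \<longrightarrow>
            mu2_nq C \<gamma> a tau1 tau2 > 0)"
proof (intro conjI allI impI)
  fix C a a' b tau1 tau2 :: real
  assume "C > 0 \<and> a > 0 \<and> a' > 0 \<and> b > 0 \<and> tau1 > 0 \<and> tau2 > 0"
  then show "sgn (mu2_q C a b tau1 tau2) = sgn (mu2_q C a' b tau1 tau2)"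
    using sgn_mu2_q_independent_of_gain by blast
next
  fix C a :: real
  assume "C > 0 \<and> a > 0"
  then have "mu2_q C a (1/6) 1 1 < 0"
    using mu2_q_one_sixth_neg by blast
  then show "\<exists>b tau1 tau2::real. b > 0 \<and> tau1 > 0 \<and> tau2 > 0 \<and> mu2_q C a b tau1 tau2 < 0"
    by (intro exI[of _ "1/6"] exI[of _ 1]) simp
next
  fix C \<gamma> a tau1 tau2 :: real
  assume "C > 0 \<and> 0 < \<gamma> \<and> \<gamma> \<le> 1 \<and> a > 0 \<and> tau1 > 0 \<and> tau2 > 0"
  then show "mu2_nq C \<gamma> a tau1 tau2 > 0"
    using mu2_nq_pos by blast
qed

end
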